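(* Let $q$ be a prime power, $n\ge 1$ with $\gcd(n,q)=1$, and $\lambda\in\mathbb{F}_q^{*}$ of multiplicative order $t$. Let $\mathcal{C}=\mathcal{I}_i$ be an irreducible $\lambda$-constacyclic code of length $n$ and dimension $k$ over $\mathbb{F}_q$ corresponding to the $q$-cyclotomic coset $C_{1+t\alpha_i}=\{1+t\alpha_i,(1+t\alpha_i)q,\dots,(1+t\alpha_i)q^{k-1}\}$ modulo $tn$ (so $k=d_i$). Then $$N_{\langle\rho\rangle}(\mathcal{C}^{*})=\frac{(q^k-1)\gcd(1+t\alpha_i,n)}{tn}.$$ Moreover, the number of distinct nonzero Hamming weights of codewords of $\mathcal{C}$ is at most $N_{\langle\rho\rangle}(\mathcal{C}^{*})$, with equality if and only if for any two nonzero codewords $c_1,c_2\in\mathcal{C}$ of the same Hamming weight there exists an integer $j$ with $\rho^{j}(c_1)=c_2$.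
   Context: Standing setup: $q$ is a prime power, $n$ a positive integer with $\gcd(n,q)=1$, $\lambda\in\mathbb{F}_q^{*}$ has multiplicative order $t$ (so $t\mid q-1$). $\mathcal{R}=\mathbb{F}_q[x]/\langle x^n-\lambda\rangle$; vectors $(c_0,\dots,c_{n-1})\in\mathbb{F}_q^n$ are identified with $c_0+c_1x+\dots+c_{n-1}x^{n-1}\in\mathcal{R}$, and a $\lambda$-constacyclic code of length $n$ is an ideal of $\mathcal{R}$. Let $\zeta$ be a primitive $tn$-th root of unity in an extension $\mathbb{F}_{q^m}$ with $\zeta^n=\lambda$, so $x^n-\lambda=\prod_{i=0}^{n-1}(x-\zeta^{1+ti})$. The set $\mathcal{S}=\{1+ti:0\le i\le n-1\}$ (residues mod $tn$) is partitioned into the distinct $q$-cyclotomic cosets modulo $tn$, $C_{1+t\alpha_j}=\{(1+t\alpha_j)q^{h}\bmod tn: h\ge 0\}$, $j=0,\dots,s$, with $0=\alpha_0<\alpha_1<\dots<\alpha_s\le n-1$ and $d_j=|C_{1+t\alpha_j}|$. Let $m_j(x)=\prod_{h\in C_{1+t\alpha_j}}(x-\zeta^{h})$ (irreducible over $\mathbb{F}_q$), and let $\mathcal{I}_j$ be the ideal of $\mathcal{R}$ generated by $(x^n-\lambda)/m_j(x)$; this is an irreducible (minimal) $\lambda$-constacyclic code of dimension $d_j$, said to correspond to the coset $C_{1+t\alpha_j}$, and $\mathcal{R}=\mathcal{I}_0\oplus\dots\oplus\mathcal{I}_s$. The cyclic shift $\rho:\mathcal{R}\to\mathcal{R}$ is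 $\rho(c(x))=xc(x)$, i.e. $(c_0,\dots,c_{n-1})\mapsto(\lambda c_{n-1},c_0,\dots,c_{n-2})$; $\langle\rho\rangle$ is the cyclic group it generates, of order $tn$, acting on every $\lambda$-constacyclic code. For $b\in\mathbb{F}_q^{*}$, $\sigma_b(c)=bc$, and $M=\{\sigma_b:b\in\mathbb{F}_q^{*}\}$; $\langle\rho,M\rangle$ is the group generated by $\rho$ and $M$. For a code $\mathcal{C}$, $\mathcal{C}^{*}=\mathcal{C}\setminus\{0\}$, and for a group $G$ acting on a finite set $X$, $N_G(X)$ denotes the number of $G$-orbits on $X$. *)

theory Defs
  imports "HOL-Computational_Algebra.Polynomial"
begin

definition mult_order :: "'a::field \<Rightarrow> nat" where
  "mult_order a = (LEAST d. d > 0 \<and> a ^ d = 1)"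

definition field_embedding :: "('a::field \<Rightarrow> 'b::field) \<Rightarrow> bool" where
  "field_embedding e \<longleftrightarrow> inj e \<and> e 0 = 0 \<and> e 1 = 1 \<and>
     (\<forall>a b. e (a + b) = e a + e b) \<and> (\<forall>a b. e (a * b) = e a * e b)"

definition cyc_coset :: "nat \<Rightarrow> nat \<Rightarrow> nat \<Rightarrow> nat set" where
  "cyc_coset q N a = {(a * q ^ h) mod N | h. True}"

definition xn_minus :: "nat \<Rightarrow> 'a::field \<Rightarrow> 'a poly" where
  "xn_minus n lam = monom 1 n - [:lam:]"

text \<open>The ideal of R generated by g (for g dividing x^n - lambda, as a set of reduced
  representatives): all g*f mod (x^n - lambda).\<close>
definition ideal_gen :: "nat \<Rightarrow> 'a::field \<Rightarrow> 'a poly \<Rightarrow> 'a poly set" where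
  "ideal_gen n lam g = {(g * f) mod xn_minus n lam | f. True}"

text \<open>The constacyclic shift rho(c) = x c and its inverse x^{-1} c = lambda^{-1} x^{n-1} c in R.\<close>
definition rho :: "nat \<Rightarrow> 'a::field \<Rightarrow> 'a poly \<Rightarrow> 'a poly" where
  "rho n lam c = (monom 1 1 * c) mod xn_minus n lam"

definition rho_inv :: "nat \<Rightarrow> 'a::field \<Rightarrow> 'a poly \<Rightarrow> 'a poly" where
  "rho_inv n lam c = (monom (inverse lam) (n - 1) * c) mod xn_minus n lam"

definition rho_pow :: "nat \<Rightarrow> 'a::field \<Rightarrow> int \<Rightarrow> 'a poly \<Rightarrow> 'a poly" where
  "rho_pow n lam j = (if j \<ge> 0 then rho n lam ^^ nat j else rho_inv n lam ^^ nat (- j))"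

definition rho_orbit :: "nat \<Rightarrow> 'a::field \<Rightarrow> 'a poly \<Rightarrow> 'a poly set" where
  "rho_orbit n lam c = {rho_pow n lam j c | j. True}"

definition num_rho_orbits :: "nat \<Rightarrow> 'a::field \<Rightarrow> 'a poly set \<Rightarrow> nat" where
  "num_rho_orbits n lam X = card (rho_orbit n lam ` X)"

definition hweight :: "'a::zero poly \<Rightarrow> nat" where
  "hweight c = card {i. coeff c i \<noteq> 0}"

end

theory Submission
  imports Defs
begin

text \<open>
  Write \<open>N = t n\<close>, \<open>a = 1 + t \<alpha>\<close> and \<open>h = (x\<^sup>n - \<lambda>) / m\<close>. The codewords are exactly
  \<open>h r\<close> with \<open>deg r < k\<close>, so \<open>|C| = q\<^sup>k\<close>. For a nonzero codeword \<open>c = h r\<close> we have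
  \<open>x\<^sup>e c = c\<close> in \<open>R\<close> iff \<open>m\<close> divides \<open>(x\<^sup>e - 1) r\<close>; since \<open>r\<close> has fewer than \<open>k = deg m\<close> roots,
  this happens iff every root \<open>\<zeta>^(a q^s)\<close> of \<open>m\<close> is an \<open>e\<close>-th root of unity, i.e. iff \<open>N\<close>
  divides \<open>a e\<close>, i.e. iff \<open>N / gcd(a, n)\<close> divides \<open>e\<close> (note \<open>gcd(a, t) = 1\<close>). So every orbit of
  \<open>\<langle>\<rho>\<rangle>\<close> on \<open>C\<^sup>*\<close> has exactly \<open>N / gcd(a, n)\<close> elements, which gives the number of orbits.
  The shift \<open>\<rho>\<close> permutes coordinates up to the nonzero factor \<open>\<lambda>\<close>, so the Hamming weight is
  constant on orbits; the weights are the image of the orbits under the induced map, which is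
  injective exactly when codewords of equal weight lie in the same orbit.
\<close>

section \<open>Field embeddings\<close>

context
  fixes e :: "'a::field \<Rightarrow> 'b::field"
  assumes e: "field_embedding e"
begin

lemma embedding_0 [simp]: "e 0 = 0"
  and embedding_1 [simp]: "e 1 = 1"
  and embedding_add [simp]: "e (x + y) = e x + e y"
  and embedding_mult [simp]: "e (x * y) = e x * e y"
  and embedding_eq_iff [simp]: "e x = e y \<longleftrightarrow> x = y"
  using e by (auto simp: field_embedding_def dest: injD)

lemma embedding_eq_0_iff [simp]: "e x = 0 \<longleftrightarrow> x = 0"
  using embedding_eq_iff[of x 0] by simp

lemma embedding_uminus [simp]: "e (- x) = - e x"
  by (metis embedding_0 embedding_add eq_neg_iff_add_eq_0)

lemma embedding_diff [simp]: "e (x - y) = e x - e y"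
  by (metis diff_conv_add_uminus embedding_add embedding_uminus)

lemma embedding_sum: "e (sum f A) = (\<Sum>x\<in>A. e (f x))"
  by (induction A rule: infinite_finite_induct) auto

lemma embedding_power [simp]: "e (x ^ n) = e x ^ n"
  by (induction n) auto

lemma map_poly_embedding_add [simp]: "map_poly e (p + q) = map_poly e p + map_poly e q"
  by (intro poly_eqI) (simp add: coeff_map_poly)

lemma map_poly_embedding_diff [simp]: "map_poly e (p - q) = map_poly e p - map_poly e q"
  by (intro poly_eqI) (simp add: coeff_map_poly)

lemma map_poly_embedding_mult [simp]: "map_poly e (p * q) = map_poly e p * map_poly e q"
  by (intro poly_eqI) (simp add: coeff_map_poly coeff_mult embedding_sum)

lemma map_poly_embedding_monom [simp]: "map_poly e (monom c n) = monom (e c) n"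
  by (simp add: map_poly_monom)

lemma map_poly_embedding_const [simp]: "map_poly e [:c:] = [:e c:]"
  by (simp add: map_poly_pCons)

lemma map_poly_embedding_eq_0_iff [simp]: "map_poly e p = 0 \<longleftrightarrow> p = 0"
  by (simp add: poly_eq_iff coeff_map_poly)

lemma degree_map_poly_embedding [simp]: "degree (map_poly e p) = degree p"
  by (rule degree_map_poly) simp

lemma map_poly_embedding_dvd_iff: "map_poly e u dvd map_poly e v \<longleftrightarrow> u dvd v"
proof
  assume "u dvd v"
  then show "map_poly e u dvd map_poly e v"
    by (metis dvdE dvdI map_poly_embedding_mult)
next
  assume dvd: "map_poly e u dvd map_poly e v"
  show "u dvd v"
  proof (cases "u = 0")
    case True
    with dvd show ?thesis
      by simp
  next
    case False
    have "map_poly e v = map_poly e u * map_poly e (v div u) + map_poly e (v mod u)"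
      by (metis div_mult_mod_eq map_poly_embedding_add map_poly_embedding_mult mult.commute)
    with dvd have "map_poly e u dvd map_poly e (v mod u)"
      by (metis dvd_add_right_iff dvd_triv_left)
    moreover have "v mod u = 0 \<or> degree (v mod u) < degree u"
      using False degree_mod_less by blast
    ultimately have "v mod u = 0"
      using dvd_imp_degree_le[of "map_poly e u" "map_poly e (v mod u)"] False
      by force
    then show ?thesis
      by (simp add: mod_eq_0_iff_dvd)
  qed
qed

end

lemma finite_field_power_card_minus_one:
  fixes x :: "'a::{finite,field}"
  assumes "x \<noteq> 0"
  shows "x ^ (card (UNIV :: 'a set) - 1) = 1"
proof -
  let ?U = "UNIV - {0::'a}"
  have "bij_betw (\<lambda>y. x * y) ?U ?U"
    by (rule bij_betw_byWitness[where f'="\<lambda>y. inverse x * y"]) (use assms in auto)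
  then have "(\<Prod>y\<in>?U. y) = (\<Prod>y\<in>?U. x * y)"
    using prod.reindex_bij_betw[of "\<lambda>y. x * y" ?U ?U "\<lambda>y. y"] by simp
  also have "\<dots> = x ^ card ?U * (\<Prod>y\<in>?U. y)"
    by (simp add: prod.distrib)
  finally have "(\<Prod>y\<in>?U. y) = x ^ card ?U * (\<Prod>y\<in>?U. y)" .
  moreover have "card ?U = card (UNIV :: 'a set) - 1"
    by (simp add: card_Diff_subset)
  ultimately show ?thesis
    by simp
qed

lemma card_polys_degree_less:
  assumes "k \<ge> 1"
  shows "card {r::'a::{finite,field} poly. degree r < k} = card (UNIV :: 'a set) ^ k"
proof -
  let ?L = "{xs::'a list. set xs \<subseteq> UNIV \<and> length xs = k}"
  have "inj_on Poly ?L"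
  proof (rule inj_onI)
    fix xs ys
    assume "xs \<in> ?L" "ys \<in> ?L" "Poly xs = Poly ys"
    then have "length xs = length ys" "\<And>i. nth_default 0 xs i = nth_default 0 ys i"
      by (auto dest: arg_cong[where f="\<lambda>p. coeff p _"])
    then show "xs = ys"
      by (metis nth_default_def nth_equalityI)
  qed
  moreover have "{r::'a poly. degree r < k} = Poly ` ?L"
  proof (intro set_eqI iffI)
    fix r :: "'a poly"
    assume "r \<in> {r. degree r < k}"
    then have "length (coeffs r) \<le> k"
      by (cases "r = 0") (auto simp: length_coeffs_degree)
    then have "coeffs r @ replicate (k - length (coeffs r)) 0 \<in> ?L"
      by simp
    moreover have "r = Poly (coeffs r @ replicate (k - length (coeffs r)) 0)"
      by simp
    ultimately show "r \<in> Poly ` ?L"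
      by blast
  next
    fix r :: "'a poly"
    assume "r \<in> Poly ` ?L"
    then obtain xs where "r = Poly xs" "length xs = k"
      by auto
    moreover have "degree (Poly xs) \<le> length xs - 1"
      by (rule degree_le) (auto simp: nth_default_def)
    ultimately show "r \<in> {r. degree r < k}"
      using assms by simp
  qed
  ultimately have "card {r::'a poly. degree r < k} = card ?L"
    by (simp add: card_image)
  also have "\<dots> = card (UNIV :: 'a set) ^ k"
    by (rule card_lists_length_eq) simp
  finally show ?thesis .
qed

lemma prod_linear_factors_dvd:
  fixes f :: "nat \<Rightarrow> 'b::field"
  assumes "finite K" "inj_on f K" "\<forall>h\<in>K. poly p (f h) = 0"
  shows "(\<Prod>h\<in>K. [:- f h, 1:]) dvd p"
  using assms
proof (induction K arbitrary: p rule: finite_induct)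
  case empty
  then show ?case by simp
next
  case (insert b A)
  then have "(\<Prod>h\<in>A. [:- f h, 1:]) dvd p"
    by auto
  then obtain s where s: "p = (\<Prod>h\<in>A. [:- f h, 1:]) * s" ..
  have "poly (\<Prod>h\<in>A. [:- f h, 1:]) (f b) \<noteq> 0"
    using insert by (auto simp: poly_prod inj_on_def)
  with insert.prems have "poly s (f b) = 0"
    by (simp add: s)
  then obtain s' where s': "s = [:- f b, 1:] * s'"
    using poly_eq_0_iff_dvd by blast
  have "p = ([:- f b, 1:] * (\<Prod>h\<in>A. [:- f h, 1:])) * s'"
    by (simp only: s s' mult_ac)
  then show ?case
    unfolding prod.insert[OF insert.hyps] by (rule dvdI)
qed

lemma card_roots_le_degree:
  fixes f :: "nat \<Rightarrow> 'b::field"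
  assumes "r \<noteq> 0" "inj_on f K" "\<forall>h\<in>K. poly r (f h) = 0"
  shows "card K \<le> degree r"
proof -
  have "card K = card (f ` K)"
    using assms(2) by (simp add: card_image)
  also have "\<dots> \<le> card {x. poly r x = 0}"
    using assms by (intro card_mono poly_roots_finite) auto
  also have "\<dots> \<le> degree r"
    by (rule card_poly_roots_bound[OF assms(1)])
  finally show ?thesis .
qed

lemma power_eq_if_mod_eq:
  fixes z :: "'b::comm_monoid_mult"
  assumes "z ^ N = 1" "x mod N = y mod N"
  shows "z ^ x = z ^ y"
proof -
  have reduce: "z ^ w = z ^ (w mod N)" for w
  proof -
    have "z ^ w = z ^ (N * (w div N) + w mod N)"
      by simp
    also have "\<dots> = (z ^ N) ^ (w div N) * z ^ (w mod N)"
      by (simp only: power_add power_mult)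
    finally have "z ^ w = (z ^ N) ^ (w div N) * z ^ (w mod N)" .
    then show ?thesis
      using assms(1) by simp
  qed
  show ?thesis
    using reduce[of x] reduce[of y] assms(2) by simp
qed

lemma dvd_mult_iff_div_gcd_dvd:
  fixes N a e :: nat
  assumes "N > 0"
  shows "N dvd a * e \<longleftrightarrow> N div gcd a N dvd e"
proof -
  define g where "g = gcd a N"
  obtain a' D where a': "a = g * a'" and D: "N = g * D"
    unfolding g_def by (meson gcd_dvd1 gcd_dvd2 dvdE)
  have "g > 0"
    using assms by (simp add: g_def)
  have "coprime (a div g) (N div g)"
    using assms unfolding g_def by (intro div_gcd_coprime) simp
  then have "coprime a' D"
    using a' D \<open>g > 0\<close> by simp
  have "N dvd a * e \<longleftrightarrow> g * D dvd g * (a' * e)"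
    using a' D by (simp add: mult.assoc)
  also have "\<dots> \<longleftrightarrow> D dvd e"
    using \<open>g > 0\<close> \<open>coprime a' D\<close> by (simp add: coprime_commute coprime_dvd_mult_right_iff)
  finally show ?thesis
    unfolding g_def[symmetric] using D \<open>g > 0\<close> by simp
qed

section \<open>Orbit counting\<close>

definition orbit_partition :: "('x \<Rightarrow> 'x set) \<Rightarrow> 'x set \<Rightarrow> bool" where
  "orbit_partition orb X \<longleftrightarrow> (\<forall>c\<in>X. c \<in> orb c \<and> orb c \<subseteq> X \<and> (\<forall>d\<in>orb c. orb d = orb c))"

lemma card_orbits_mult:
  assumes "finite X" "orbit_partition orb X" "\<forall>c\<in>X. card (orb c) = D"
  shows "D * card (orb ` X) = card X"
proof -
  have union: "\<Union> (orb ` X) = X"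
    using assms(2) unfolding orbit_partition_def by blast
  have same: "orb d = orb c" if "c \<in> X" "d \<in> orb c" for c d
    using that assms(2) unfolding orbit_partition_def by blast
  have "D * card (orb ` X) = card (\<Union> (orb ` X))"
  proof (rule card_partition)
    show "finite (\<Union> (orb ` X))" "finite (orb ` X)"
      using assms(1) union by simp_all
    show "card A = D" if "A \<in> orb ` X" for A
      using that assms(3) by blast
    show "A \<inter> B = {}" if "A \<in> orb ` X" "B \<in> orb ` X" "A \<noteq> B" for A B
      using that same by (metis disjoint_iff imageE)
  qed
  then show ?thesis
    unfolding union .
qed

lemma
  assumes "finite X" "orbit_partition orb X" "\<forall>c\<in>X. \<forall>d\<in>orb c. w d = w c"
  shows card_invariant_image_le: "card (w ` X) \<le> card (orb ` X)"
    and card_invariant_image_eq_iff: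
      "card (w ` X) = card (orb ` X) \<longleftrightarrow> (\<forall>c1\<in>X. \<forall>c2\<in>X. w c1 = w c2 \<longrightarrow> c2 \<in> orb c1)"
proof -
  have self: "c \<in> orb c" if "c \<in> X" for c
    using that assms(2) unfolding orbit_partition_def by blast
  have same: "orb d = orb c" if "c \<in> X" "d \<in> orb c" for c d
    using that assms(2) unfolding orbit_partition_def by blast
  define W where "W A = w (SOME x. x \<in> A)" for A
  have W: "W (orb c) = w c" if "c \<in> X" for c
    using that assms(3) someI[of "\<lambda>x. x \<in> orb c", OF self] unfolding W_def by blast
  then have image: "w ` X = W ` orb ` X"
    unfolding image_image by (auto intro: image_cong)
  then show "card (w ` X) \<le> card (orb ` X)"
    using assms(1) by (simp add: card_image_le)
  have "card (w ` X) = card (orb ` X) \<longleftrightarrow> inj_on W (orb ` X)"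
    unfolding image using assms(1) by (simp add: inj_on_iff_eq_card)
  also have "\<dots> \<longleftrightarrow> (\<forall>c1\<in>X. \<forall>c2\<in>X. w c1 = w c2 \<longrightarrow> c2 \<in> orb c1)"
  proof
    assume inj: "inj_on W (orb ` X)"
    show "\<forall>c1\<in>X. \<forall>c2\<in>X. w c1 = w c2 \<longrightarrow> c2 \<in> orb c1"
    proof (intro ballI impI)
      fix c1 c2
      assume c: "c1 \<in> X" "c2 \<in> X" "w c1 = w c2"
      then have "orb c1 = orb c2"
        using inj_onD[OF inj, of "orb c1" "orb c2"] W by simp
      then show "c2 \<in> orb c1"
        using self[OF c(2)] by simp
    qed
  next
    assume equal_weight: "\<forall>c1\<in>X. \<forall>c2\<in>X. w c1 = w c2 \<longrightarrow> c2 \<in> orb c1"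
    show "inj_on W (orb ` X)"
    proof (rule inj_onI)
      fix A B
      assume "A \<in> orb ` X" "B \<in> orb ` X" "W A = W B"
      then obtain c1 c2 where "c1 \<in> X" "c2 \<in> X" "A = orb c1" "B = orb c2" "w c1 = w c2"
        using W by auto
      then show "A = B"
        using equal_weight same by metis
    qed
  qed
  finally show "card (w ` X) = card (orb ` X) \<longleftrightarrow> (\<forall>c1\<in>X. \<forall>c2\<in>X. w c1 = w c2 \<longrightarrow> c2 \<in> orb c1)" .
qed

locale constacyclic_coset =
  fixes lam :: "'a::{finite,field}"
    and emb :: "'a \<Rightarrow> 'b::field"
    and zeta :: 'b
    and n t \<alpha> :: nat
    and m :: "'a poly"
    and q :: nat
  assumes q_card: "q = card (UNIV :: 'a set)"
    and n_pos: "n \<ge> 1"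
    and coprime_n_q: "coprime n q"
    and lam_nonzero: "lam \<noteq> 0"
    and t_def: "t = mult_order lam"
    and emb: "field_embedding emb"
    and zeta_power_order: "zeta ^ (t * n) = 1"
    and zeta_primitive: "\<forall>j. 0 < j \<and> j < t * n \<longrightarrow> zeta ^ j \<noteq> 1"
    and zeta_power_n: "zeta ^ n = emb lam"
    and m_roots: "map_poly emb m = (\<Prod>h\<in>cyc_coset q (t * n) (1 + t * \<alpha>). [:- (zeta ^ h), 1:])"
begin

abbreviation "N \<equiv> t * n"
abbreviation "a \<equiv> 1 + t * \<alpha>"
abbreviation "K \<equiv> cyc_coset q N a"
abbreviation "k \<equiv> card K"
abbreviation "X \<equiv> xn_minus n lam"

lemma q_ge_2: "q \<ge> 2"
proof -
  have "card {0::'a, 1} \<le> card (UNIV :: 'a set)"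
    by (rule card_mono) auto
  then show ?thesis
    by (simp add: q_card)
qed

lemma lam_power_q_minus_1: "lam ^ (q - 1) = 1"
  using finite_field_power_card_minus_one[OF lam_nonzero] by (simp add: q_card)

lemma t_pos: "t > 0"
  and lam_power_t: "lam ^ t = 1"
  and t_le: "0 < d \<Longrightarrow> lam ^ d = 1 \<Longrightarrow> t \<le> d"
proof -
  have "q - 1 > 0 \<and> lam ^ (q - 1) = 1"
    using q_ge_2 lam_power_q_minus_1 by auto
  then show "t > 0" "lam ^ t = 1"
    using LeastI[of "\<lambda>d. d > 0 \<and> lam ^ d = 1"] unfolding t_def mult_order_def by blast+
  show "0 < d \<Longrightarrow> lam ^ d = 1 \<Longrightarrow> t \<le> d"
    by (auto simp: t_def mult_order_def intro: Least_le)
qed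

lemma N_pos: "N > 0"
  using t_pos n_pos by simp

lemma t_dvd_q_minus_1: "t dvd q - 1"
proof -
  have "lam ^ ((q - 1) mod t) = 1"
    using power_eq_if_mod_eq[OF lam_power_t, of "(q - 1) mod t" "q - 1"] lam_power_q_minus_1 by simp
  then have "(q - 1) mod t = 0"
    using t_le[of "(q - 1) mod t"] t_pos by (meson mod_less_divisor not_gr0 not_le)
  then show ?thesis
    by auto
qed

lemma q_eq_t_mult_plus_1:
  obtains s where "q = t * s + 1"
proof -
  obtain s where "q - 1 = t * s"
    using t_dvd_q_minus_1 by blast
  then show ?thesis
    using that[of s] q_ge_2 by simp
qed

lemma q_mod_t: "q mod t = 1 mod t"
proof -
  obtain s where "q = t * s + 1"
    using q_eq_t_mult_plus_1 .
  then show ?thesis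
    by (metis add.commute mod_mult_self2)
qed

lemma coprime_q_N: "coprime q N"
proof -
  obtain s where "q = t * s + 1"
    using q_eq_t_mult_plus_1 .
  then have "coprime q t"
    using gcd_add_mult[of t s 1] by (simp add: coprime_iff_gcd_eq_1 gcd.commute mult.commute)
  then show ?thesis
    using coprime_n_q by (simp add: coprime_commute)
qed

lemma coprime_a_t: "coprime a t"
  by (metis add.commute coprime_iff_gcd_eq_1 gcd.commute gcd_add_mult gcd_1_nat mult.commute)

lemma coset_iff: "h \<in> K \<longleftrightarrow> (\<exists>s. h = (a * q ^ s) mod N)"
  by (auto simp: cyc_coset_def)

lemma coset_less: "h \<in> K \<Longrightarrow> h < N"
  using N_pos by (auto simp: cyc_coset_def)

lemma finite_coset: "finite K"
  using coset_less finite_nat_iff_bounded by blast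

lemma card_coset_pos: "k > 0"
proof -
  have "a mod N \<in> K"
    unfolding coset_iff by (rule exI[of _ 0]) simp
  then show ?thesis
    using finite_coset card_gt_0_iff by blast
qed

lemma zeta_power_eq_1_iff: "zeta ^ x = 1 \<longleftrightarrow> N dvd x"
proof
  assume "zeta ^ x = 1"
  moreover have "zeta ^ x = zeta ^ (x mod N)"
    by (rule power_eq_if_mod_eq[OF zeta_power_order]) simp
  ultimately have "zeta ^ (x mod N) = 1"
    by simp
  then have "x mod N = 0"
    using zeta_primitive N_pos by (meson mod_less_divisor not_gr0)
  then show "N dvd x"
    by auto
next
  assume "N dvd x"
  then show "zeta ^ x = 1"
    using zeta_power_order by (auto simp: power_mult)
qed

lemma inj_on_zeta_power: "inj_on (\<lambda>h. zeta ^ h) {..<N}"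
proof -
  have "zeta \<noteq> 0"
    using zeta_power_order N_pos by (metis power_0_left zero_neq_one not_gr0)
  have "x = y" if "x < N" "y < N" "zeta ^ x = zeta ^ y" "x \<le> y" for x y
  proof -
    have "zeta ^ y = zeta ^ x * zeta ^ (y - x)"
      using \<open>x \<le> y\<close> by (simp flip: power_add)
    then have "zeta ^ (y - x) = 1"
      using \<open>zeta \<noteq> 0\<close> \<open>zeta ^ x = zeta ^ y\<close> by simp
    then have "N dvd y - x"
      using zeta_power_eq_1_iff by simp
    moreover have "y - x < N"
      using that by simp
    ultimately show "x = y"
      using \<open>x \<le> y\<close> by (metis diff_is_0_eq dvd_imp_le le_antisym not_gr0 not_le)
  qed
  then show ?thesis
    by (metis inj_onI lessThan_iff nat_le_linear)
qed

lemma inj_on_coset: "inj_on (\<lambda>h. zeta ^ h) K"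
  using inj_on_zeta_power coset_less by (meson inj_on_subset lessThan_iff subsetI)

text \<open>Multiplication by the unit \<open>q\<close> preserves divisibility by \<open>N\<close>.\<close>

lemma coset_dvd_iff: "h \<in> K \<Longrightarrow> N dvd h * e \<longleftrightarrow> N dvd a * e"
proof -
  assume "h \<in> K"
  then obtain s where h: "h = (a * q ^ s) mod N"
    using coset_iff by blast
  have "N dvd h * e \<longleftrightarrow> N dvd a * q ^ s * e"
    unfolding h by (simp add: dvd_eq_mod_eq_0 mod_mult_left_eq)
  also have "\<dots> \<longleftrightarrow> N dvd (a * e) * q ^ s"
    by (simp only: mult_ac)
  also have "\<dots> \<longleftrightarrow> N dvd a * e"
    using coprime_q_N by (simp add: coprime_commute coprime_dvd_mult_left_iff)
  finally show ?thesis .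
qed

lemma coset_root: "h \<in> K \<Longrightarrow> (zeta ^ h) ^ n = emb lam"
proof -
  assume "h \<in> K"
  then obtain s where h: "h = (a * q ^ s) mod N"
    using coset_iff by blast
  have "zeta ^ h = zeta ^ (a * q ^ s)"
    unfolding h by (rule power_eq_if_mod_eq[OF zeta_power_order]) simp
  then have "(zeta ^ h) ^ n = (zeta ^ n) ^ (a * q ^ s)"
    by (simp flip: power_mult add: mult.commute)
  also have "\<dots> = emb (lam ^ (a * q ^ s))"
    using zeta_power_n by (simp add: embedding_power[OF emb])
  also have "(a * q ^ s) mod t = (1 * 1 ^ s) mod t"
    using q_mod_t by (metis mod_mult_cong mod_mult_self2 power_mod)
  then have "lam ^ (a * q ^ s) = lam ^ 1"
    by (intro power_eq_if_mod_eq[OF lam_power_t]) simp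
  finally show ?thesis
    by simp
qed

definition gen :: "'a poly" where
  "gen = X div m"

definition code :: "'a poly set" where
  "code = ideal_gen n lam gen"

lemma degree_m: "degree m = k"
  using degree_map_poly_embedding[OF emb, of m] finite_coset
  by (simp add: m_roots degree_prod_eq_sum_degree)

lemma m_nonzero: "m \<noteq> 0"
  using degree_m card_coset_pos by auto

lemma degree_X: "degree X = n"
proof -
  have "degree (monom 1 n + - [:lam:]) = degree (monom (1::'a) n)"
    using n_pos by (intro degree_add_eq_left) (simp add: degree_monom_eq)
  then show ?thesis
    unfolding xn_minus_def diff_conv_add_uminus by (simp add: degree_monom_eq)
qed

lemma X_nonzero: "X \<noteq> 0"
  using degree_X n_pos by auto

lemma m_dvd_X: "m dvd X"
proof -
  have "map_poly emb X = monom 1 n - [:emb lam:]"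
    by (simp add: xn_minus_def emb)
  then have "map_poly emb m dvd map_poly emb X"
    unfolding m_roots
    by (intro prod_linear_factors_dvd finite_coset inj_on_coset) (simp add: poly_monom coset_root)
  then show ?thesis
    using map_poly_embedding_dvd_iff[OF emb] by blast
qed

lemma X_eq: "X = gen * m"
  using m_dvd_X by (simp add: gen_def)

lemma gen_nonzero: "gen \<noteq> 0"
  using X_eq X_nonzero by auto

lemma code_eq_image: "code = (\<lambda>r. gen * r) ` {r. degree r < k}"
proof (intro set_eqI iffI)
  fix c
  assume "c \<in> code"
  then obtain f where "c = (gen * f) mod X"
    by (auto simp: code_def ideal_gen_def)
  then have "c = gen * (f mod m)"
    by (simp add: X_eq mod_mult_mult1)
  moreover have "degree (f mod m) < k"
    using degree_mod_less[OF m_nonzero, of f] degree_m card_coset_pos by auto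
  ultimately show "c \<in> (\<lambda>r. gen * r) ` {r. degree r < k}"
    by blast
next
  fix c
  assume "c \<in> (\<lambda>r. gen * r) ` {r. degree r < k}"
  then obtain r where r: "c = gen * r" "degree r < k"
    by auto
  then have "r mod m = r"
    using degree_m by (simp add: mod_poly_less)
  then have "c = (gen * r) mod X"
    by (simp add: r X_eq mod_mult_mult1)
  then show "c \<in> code"
    by (auto simp: code_def ideal_gen_def)
qed

lemma card_code: "card code = q ^ k"
proof -
  have "inj_on (\<lambda>r. gen * r) {r. degree r < k}"
    using gen_nonzero by (auto intro: inj_onI)
  then have "card code = card {r::'a poly. degree r < k}"
    by (simp add: code_eq_image card_image)
  also have "\<dots> = q ^ k"
    using card_polys_degree_less[where 'a='a, of k] card_coset_pos by (simp add: q_card)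
  finally show ?thesis .
qed

lemma finite_code: "finite code"
  using card_code q_ge_2 by (intro card_ge_0_finite) simp

lemma code_reduced: "c \<in> code \<Longrightarrow> c mod X = c"
  by (auto simp: code_def ideal_gen_def)

lemma zero_in_code: "0 \<in> code"
  unfolding code_eq_image using card_coset_pos by (auto intro!: image_eqI[where x=0])

section \<open>The shift as multiplication by powers of \<open>x\<close>\<close>

definition shift :: "nat \<Rightarrow> 'a poly \<Rightarrow> 'a poly" where
  "shift i c = (monom 1 i * c) mod X"

lemma shift_shift: "shift i (shift j c) = shift (i + j) c"
  unfolding shift_def by (simp add: mod_mult_right_eq mult.assoc[symmetric] mult_monom add.commute)

lemma shift_0: "c mod X = c \<Longrightarrow> shift 0 c = c"
  by (simp add: shift_def monom_0)

lemma shift_reduced: "shift i c mod X = shift i c"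
  by (simp add: shift_def)

lemma monom_n_power_mod: "monom 1 n ^ j mod X = [:lam ^ j:] mod X"
proof -
  have "monom 1 n mod X = [:lam:] mod X"
    by (simp add: mod_eq_dvd_iff xn_minus_def)
  then have "monom 1 n ^ j mod X = [:lam:] ^ j mod X"
    by (metis power_mod)
  then show ?thesis
    by (simp add: poly_const_pow)
qed

lemma monom_mod_X_eq_imp_shift_eq:
  "monom 1 i mod X = p mod X \<Longrightarrow> shift i c = (p * c) mod X"
  unfolding shift_def by (metis mod_mult_left_eq)

lemma shift_N_mult: "shift (N * s) c = c mod X"
proof -
  have "monom (1::'a) (N * s) = (monom 1 n ^ t) ^ s"
    by (simp add: monom_power mult.commute)
  then have "monom (1::'a) (N * s) mod X = (monom 1 n ^ t mod X) ^ s mod X"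
    by (simp add: power_mod)
  also have "\<dots> = (1 mod X) ^ s mod X"
    using monom_n_power_mod[of t] lam_power_t by (simp add: one_pCons)
  also have "\<dots> = 1 mod X"
    by (simp add: power_mod)
  finally show ?thesis
    by (simp add: monom_mod_X_eq_imp_shift_eq)
qed

lemma shift_add_N_mult: "shift (i + N * s) c = shift i c"
  by (metis shift_N_mult shift_def shift_shift mod_mult_right_eq)

lemma rho_funpow: "c mod X = c \<Longrightarrow> (rho n lam ^^ i) c = shift i c"
proof (induction i)
  case 0
  then show ?case
    by (simp add: shift_0)
next
  case (Suc i)
  then have "(rho n lam ^^ Suc i) c = rho n lam (shift i c)"
    by simp
  also have "\<dots> = shift 1 (shift i c)"
    by (simp add: rho_def shift_def)
  finally show ?case
    by (simp add: shift_shift)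
qed

lemma rho_inv_eq_shift: "rho_inv n lam c = shift (N - 1) c"
proof -
  have "lam * lam ^ (t - 1) = 1"
    using t_pos lam_power_t by (metis Suc_diff_1 power_Suc)
  then have lam_inverse: "lam ^ (t - 1) = inverse lam"
    by (metis inverse_unique)
  have "N - 1 = (n - 1) + n * (t - 1)"
    using t_pos n_pos by (simp add: algebra_simps diff_mult_distrib2)
  then have "monom (1::'a) (N - 1) = monom 1 (n - 1) * monom 1 n ^ (t - 1)"
    by (simp add: monom_power mult_monom)
  then have "monom (1::'a) (N - 1) mod X = (monom 1 (n - 1) * (monom 1 n ^ (t - 1) mod X)) mod X"
    by (simp add: mod_mult_right_eq)
  also have "\<dots> = (monom 1 (n - 1) * [:inverse lam:]) mod X"
    using lam_inverse by (simp add: monom_n_power_mod mod_mult_right_eq)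
  also have "monom 1 (n - 1) * [:inverse lam:] = monom (inverse lam) (n - 1)"
    by (simp flip: monom_0 add: mult_monom)
  finally show ?thesis
    by (simp add: monom_mod_X_eq_imp_shift_eq rho_inv_def)
qed

lemma rho_inv_funpow: "c mod X = c \<Longrightarrow> (rho_inv n lam ^^ l) c = shift ((N - 1) * l) c"
proof (induction l)
  case 0
  then show ?case
    by (simp add: shift_0)
next
  case (Suc l)
  then have "(rho_inv n lam ^^ Suc l) c = rho_inv n lam (shift ((N - 1) * l) c)"
    by simp
  also have "\<dots> = shift (N - 1) (shift ((N - 1) * l) c)"
    by (rule rho_inv_eq_shift)
  finally show ?case
    by (simp add: shift_shift)
qed

lemma rho_orbit_eq: "c mod X = c \<Longrightarrow> rho_orbit n lam c = range (\<lambda>i. shift i c)"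
proof (intro set_eqI iffI)
  fix d
  assume "c mod X = c" "d \<in> rho_orbit n lam c"
  then show "d \<in> range (\<lambda>i. shift i c)"
    by (auto simp: rho_orbit_def rho_pow_def rho_funpow rho_inv_funpow)
next
  fix d
  assume "c mod X = c" "d \<in> range (\<lambda>i. shift i c)"
  then obtain i where "d = rho_pow n lam (int i) c"
    by (auto simp: rho_pow_def rho_funpow)
  then show "d \<in> rho_orbit n lam c"
    by (auto simp: rho_orbit_def)
qed

section \<open>Stabilisers and orbit sizes\<close>

text \<open>
  \<open>m\<close> divides \<open>(x\<^sup>e - 1) R\<close> iff all roots \<open>\<zeta>\<^sup>h\<close>, \<open>h \<in> K\<close>, are roots of \<open>x\<^sup>e - 1\<close>: the
  polynomial \<open>R\<close> has too few roots to absorb any of them.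
\<close>

lemma map_poly_m_dvd_iff:
  fixes R :: "'b poly"
  assumes "R \<noteq> 0" "degree R < k"
  shows "map_poly emb m dvd (monom 1 e - 1) * R \<longleftrightarrow> N dvd a * e"
proof
  assume "N dvd a * e"
  then have "zeta ^ (h * e) = 1" if "h \<in> K" for h
    using that coset_dvd_iff zeta_power_eq_1_iff by blast
  then have "\<forall>h\<in>K. poly (monom 1 e - 1) (zeta ^ h) = 0"
    by (simp add: poly_monom power_mult)
  then have "map_poly emb m dvd monom 1 e - 1"
    unfolding m_roots by (rule prod_linear_factors_dvd[OF finite_coset inj_on_coset])
  then show "map_poly emb m dvd (monom 1 e - 1) * R"
    by (rule dvd_mult2)
next
  assume dvd: "map_poly emb m dvd (monom 1 e - 1) * R"
  show "N dvd a * e"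
  proof (rule ccontr)
    assume not_dvd: "\<not> N dvd a * e"
    have "poly R (zeta ^ h) = 0" if "h \<in> K" for h
    proof -
      have "poly (map_poly emb m) (zeta ^ h) = 0"
        using that finite_coset by (auto simp: m_roots poly_prod)
      then have "poly (monom 1 e - 1) (zeta ^ h) * poly R (zeta ^ h) = 0"
        using dvd by (metis dvdE mult_zero_left poly_mult)
      moreover have "zeta ^ (h * e) \<noteq> 1"
        using not_dvd coset_dvd_iff[OF that] zeta_power_eq_1_iff by blast
      then have "poly (monom 1 e - 1) (zeta ^ h) \<noteq> 0"
        by (simp add: poly_monom power_mult)
      ultimately show ?thesis
        by simp
    qed
    then have "k \<le> degree R"
      using card_roots_le_degree[OF assms(1) inj_on_coset] by blast
    with assms(2) show False
      by simp
  qed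
qed

lemma shift_eq_self_iff:
  assumes "c \<in> code" "c \<noteq> 0"
  shows "shift e c = c \<longleftrightarrow> N dvd a * e"
proof -
  obtain r where r: "c = gen * r" "degree r < k"
    using assms(1) code_eq_image by auto
  have "shift e c = c \<longleftrightarrow> X dvd monom 1 e * c - c"
    using code_reduced[OF assms(1)] by (metis mod_eq_dvd_iff shift_def)
  also have "monom 1 e * c - c = ((monom 1 e - 1) * r) * gen"
    by (simp add: r algebra_simps)
  also have "X dvd ((monom 1 e - 1) * r) * gen \<longleftrightarrow> m dvd (monom 1 e - 1) * r"
    using gen_nonzero by (simp add: X_eq mult.commute)
  also have "\<dots> \<longleftrightarrow> map_poly emb m dvd map_poly emb ((monom 1 e - 1) * r)"
    using map_poly_embedding_dvd_iff[OF emb] by simp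
  also have "map_poly emb ((monom 1 e - 1) * r) = (monom 1 e - 1) * map_poly emb r"
    using emb by simp
  also have "map_poly emb m dvd (monom 1 e - 1) * map_poly emb r \<longleftrightarrow> N dvd a * e"
    using r assms(2) emb by (intro map_poly_m_dvd_iff) auto
  finally show ?thesis .
qed

definition orbit_size :: nat where
  "orbit_size = N div gcd a N"

lemma orbit_size_pos: "orbit_size > 0"
  unfolding orbit_size_def using N_pos by (simp add: div_greater_zero_iff gcd_le2_nat)

lemma orbit_size_mult_gcd: "orbit_size * gcd a n = N"
proof -
  have "gcd a N = gcd a n"
    using coprime_a_t by (simp add: gcd_mult_right_left_cancel)
  then show ?thesis
    unfolding orbit_size_def by (metis dvd_div_mult_self gcd_dvd2)
qed

lemma shift_eq_self_iff_orbit_size_dvd: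
  "c \<in> code \<Longrightarrow> c \<noteq> 0 \<Longrightarrow> shift e c = c \<longleftrightarrow> orbit_size dvd e"
  using shift_eq_self_iff dvd_mult_iff_div_gcd_dvd[OF N_pos] unfolding orbit_size_def by blast

lemma shift_inverse: "c mod X = c \<Longrightarrow> shift (N * i - i) (shift i c) = c"
  using N_pos shift_N_mult[of i c] by (simp add: shift_shift)

lemma shift_eq_imp_shift_diff:
  assumes "c mod X = c" "i \<le> j" "shift i c = shift j c"
  shows "shift (j - i) c = c"
proof -
  have "c = shift (N * i - i) (shift j c)"
    using shift_inverse[OF assms(1), of i] assms(3) by simp
  also have "\<dots> = shift (N * i - i + j) c"
    by (simp add: shift_shift)
  also have "N * i - i + j = (j - i) + N * i"
    using assms(2) N_pos by simp
  finally show ?thesis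
    by (simp add: shift_add_N_mult)
qed

lemma shift_in_code: "c \<in> code \<Longrightarrow> shift i c \<in> code"
proof -
  assume "c \<in> code"
  then obtain f where "c = (gen * f) mod X"
    by (auto simp: code_def ideal_gen_def)
  then have "shift i c = (gen * (monom 1 i * f)) mod X"
    unfolding shift_def by (simp add: mod_mult_right_eq mult.left_commute)
  then show ?thesis
    by (auto simp: code_def ideal_gen_def)
qed

lemma shift_nonzero: "c \<in> code \<Longrightarrow> c \<noteq> 0 \<Longrightarrow> shift i c \<noteq> 0"
  using shift_inverse[OF code_reduced, of c i] by (auto simp: shift_def)

lemma card_shift_orbit:
  assumes "c \<in> code" "c \<noteq> 0"
  shows "card (range (\<lambda>i. shift i c)) = orbit_size"
proof -
  have "range (\<lambda>i. shift i c) = (\<lambda>i. shift i c) ` {..<orbit_size}"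
  proof (intro set_eqI iffI)
    fix d
    assume "d \<in> range (\<lambda>i. shift i c)"
    then obtain i where "d = shift i c"
      by auto
    moreover have "shift (orbit_size * (i div orbit_size)) c = c"
      using shift_eq_self_iff_orbit_size_dvd[OF assms] by simp
    ultimately have "d = shift (i mod orbit_size) c"
      by (metis shift_shift div_mult_mod_eq add.commute mult.commute)
    then show "d \<in> (\<lambda>i. shift i c) ` {..<orbit_size}"
      using orbit_size_pos by auto
  qed auto
  moreover have "inj_on (\<lambda>i. shift i c) {..<orbit_size}"
  proof -
    have le: "i = j" if "i < orbit_size" "j < orbit_size" "i \<le> j" "shift i c = shift j c" for i j
    proof -
      have "orbit_size dvd j - i"
        using shift_eq_imp_shift_diff[OF code_reduced[OF assms(1)] that(3,4)]
          shift_eq_self_iff_orbit_size_dvd[OF assms] by simp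
      moreover have "j - i < orbit_size"
        using that by simp
      ultimately show ?thesis
        using that(3) by (metis diff_is_0_eq dvd_imp_le le_antisym not_gr0 not_le)
    qed
    show ?thesis
    proof (rule inj_onI)
      fix i j
      assume "i \<in> {..<orbit_size}" "j \<in> {..<orbit_size}" "shift i c = shift j c"
      then show "i = j"
        using le[of i j] le[of j i] by (cases "i \<le> j") auto
    qed
  qed
  ultimately show ?thesis
    by (simp add: card_image)
qed

lemma shift_orbit_eq:
  assumes "c mod X = c" "d \<in> range (\<lambda>i. shift i c)"
  shows "range (\<lambda>i. shift i d) = range (\<lambda>i. shift i c)"
proof -
  obtain i where d: "d = shift i c"
    using assms(2) by auto
  have "shift l c = shift (l + N * i - i) d" for l
  proof -
    have "l + N * i - i + i = l + N * i"
      using N_pos by (simp add: trans_le_add2)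
    then show ?thesis
      by (simp add: d shift_shift shift_add_N_mult)
  qed
  then show ?thesis
    unfolding d by (auto simp: shift_shift)
qed

section \<open>The shift preserves the Hamming weight\<close>

lemma degree_less_if_reduced: "c mod X = c \<Longrightarrow> degree c < n"
  using degree_mod_less[OF X_nonzero, of c] degree_X n_pos by (cases "c = 0") auto

lemma coeff_X: "coeff X j = (if j = n then 1 else 0) - (if j = 0 then lam else 0)"
  by (simp add: xn_minus_def coeff_monom coeff_pCons split: nat.splits)

lemma coeff_shift_1:
  assumes "c mod X = c"
  shows "coeff (shift 1 c) j =
    (if j < n then if j = 0 then lam * coeff c (n - 1) else coeff c (j - 1) else 0)"
proof -
  define Q where "Q = monom 1 1 * c - smult (coeff c (n - 1)) X"
  have coeff_Q: "coeff Q j =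
    (if j < n then if j = 0 then lam * coeff c (n - 1) else coeff c (j - 1) else 0)" for j
  proof (cases "j \<le> n")
    case True
    then show ?thesis
      using n_pos by (auto simp: Q_def coeff_monom_mult coeff_X)
  next
    case False
    then have "coeff c (j - 1) = 0"
      using degree_less_if_reduced[OF assms] by (intro coeff_eq_0) simp
    with False show ?thesis
      by (simp add: Q_def coeff_monom_mult coeff_X)
  qed
  then have "degree Q \<le> n - 1"
    using n_pos by (intro degree_le) auto
  then have "Q mod X = Q"
    using degree_X n_pos by (intro mod_poly_less) simp
  moreover have "Q mod X = (monom 1 1 * c) mod X"
    unfolding Q_def mod_eq_dvd_iff by (simp add: dvd_smult)
  ultimately show ?thesis
    using coeff_Q by (simp add: shift_def)
qed

lemma hweight_shift_1:
  assumes "c mod X = c"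
  shows "hweight (shift 1 c) = hweight c"
proof -
  define S where "S = {i. coeff c i \<noteq> 0}"
  define rot where "rot i = (if i = n - 1 then 0 else i + 1)" for i :: nat
  have "S \<subseteq> {..<n}"
    using degree_less_if_reduced[OF assms] by (auto simp: S_def intro: ccontr simp: coeff_eq_0)
  have coeff_rot: "coeff (shift 1 c) (rot i) \<noteq> 0 \<longleftrightarrow> i \<in> S" if "i < n" for i
    using that lam_nonzero coeff_shift_1[OF assms, of "rot i"] by (auto simp: rot_def S_def)
  have "{j. coeff (shift 1 c) j \<noteq> 0} = rot ` S"
  proof (intro set_eqI iffI)
    fix j
    assume j: "j \<in> {j. coeff (shift 1 c) j \<noteq> 0}"
    then have "j < n"
      using coeff_shift_1[OF assms, of j] by (auto split: if_splits)
    obtain i where "i < n" "j = rot i"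
    proof (cases "j = 0")
      case True
      then show ?thesis
        using that[of "n - 1"] n_pos by (simp add: rot_def)
    next
      case False
      then show ?thesis
        using that[of "j - 1"] \<open>j < n\<close> by (simp add: rot_def)
    qed
    then show "j \<in> rot ` S"
      using j coeff_rot by auto
  next
    fix j
    assume "j \<in> rot ` S"
    then show "j \<in> {j. coeff (shift 1 c) j \<noteq> 0}"
      using coeff_rot \<open>S \<subseteq> {..<n}\<close> by auto
  qed
  moreover have "inj_on rot S"
    using \<open>S \<subseteq> {..<n}\<close> by (auto simp: rot_def inj_on_def split: if_splits)
  ultimately show ?thesis
    by (simp add: hweight_def S_def card_image)
qed

lemma hweight_shift: "c mod X = c \<Longrightarrow> hweight (shift i c) = hweight c"
proof (induction i)
  case (Suc i)
  then show ?case
    using hweight_shift_1[OF shift_reduced, of i c] by (simp add: shift_shift)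
qed (simp add: shift_0)

lemma orbit_partition_code: "orbit_partition (rho_orbit n lam) (code - {0})"
  unfolding orbit_partition_def
proof (intro ballI conjI)
  fix c
  assume c: "c \<in> code - {0}"
  then have orbit: "rho_orbit n lam c = range (\<lambda>i. shift i c)"
    using code_reduced rho_orbit_eq by blast
  show "c \<in> rho_orbit n lam c"
    using c code_reduced shift_0[of c] by (auto simp: orbit intro!: range_eqI[where x=0])
  show "rho_orbit n lam c \<subseteq> code - {0}"
    using c shift_in_code shift_nonzero by (auto simp: orbit)
  fix d
  assume "d \<in> rho_orbit n lam c"
  then have d: "d \<in> range (\<lambda>i. shift i c)"
    by (simp add: orbit)
  then have "d mod X = d"
    using shift_reduced by auto
  then show "rho_orbit n lam d = rho_orbit n lam c"
    using shift_orbit_eq[OF _ d] c code_reduced by (simp add: orbit rho_orbit_eq)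
qed

lemma num_rho_orbits_code: "orbit_size * num_rho_orbits n lam (code - {0}) = q ^ k - 1"
proof -
  have "orbit_size * num_rho_orbits n lam (code - {0}) = card (code - {0})"
    unfolding num_rho_orbits_def using finite_code orbit_partition_code
    by (intro card_orbits_mult) (auto simp: code_reduced rho_orbit_eq card_shift_orbit)
  then show ?thesis
    using card_code zero_in_code by (simp add: card_Diff_singleton)
qed

lemma real_num_rho_orbits_code:
  "real (num_rho_orbits n lam (code - {0})) = real (q ^ k - 1) * real (gcd a n) / real N"
proof -
  have num: "real (q ^ k - 1) = real orbit_size * real (num_rho_orbits n lam (code - {0}))"
    using num_rho_orbits_code by (metis of_nat_mult)
  have N: "real N = real orbit_size * real (gcd a n)"
    using orbit_size_mult_gcd by (metis of_nat_mult)
  show ?thesis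
    unfolding num N using orbit_size_pos n_pos by (simp add: field_simps)
qed

lemma hweight_rho_orbit: "c \<in> code - {0} \<Longrightarrow> d \<in> rho_orbit n lam c \<Longrightarrow> hweight d = hweight c"
  using code_reduced rho_orbit_eq hweight_shift by auto

lemma in_rho_orbit_iff: "d \<in> rho_orbit n lam c \<longleftrightarrow> (\<exists>j::int. rho_pow n lam j c = d)"
  by (auto simp: rho_orbit_def)

end

theorem lemma2:
  fixes lam :: "'a::{finite,field}"
    and emb :: "'a \<Rightarrow> 'b::field"
    and zeta :: 'b
    and n t \<alpha> :: nat
    and m :: "'a poly"
  defines "q \<equiv> card (UNIV :: 'a set)"
  defines "C \<equiv> ideal_gen n lam (xn_minus n lam div m)"
  defines "k \<equiv> card (cyc_coset q (t * n) (1 + t * \<alpha>))"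
  assumes n_pos: "n \<ge> 1"
    and coprime_nq: "coprime n q"
    and lam_nz: "lam \<noteq> 0"
    and t_def: "t = mult_order lam"
    and emb: "field_embedding emb"
    and zeta_prim: "zeta ^ (t * n) = 1" "\<forall>j. 0 < j \<and> j < t * n \<longrightarrow> zeta ^ j \<noteq> 1"
    and zeta_n: "zeta ^ n = emb lam"
    and alpha_lt: "\<alpha> < n"
    and alpha_min: "\<forall>\<beta> < \<alpha>. (1 + t * \<beta>) \<notin> cyc_coset q (t * n) (1 + t * \<alpha>)"
    and m_def: "map_poly emb m = (\<Prod>h\<in>cyc_coset q (t * n) (1 + t * \<alpha>). [:- (zeta ^ h), 1:])"
  shows "real (num_rho_orbits n lam (C - {0}))
           = real (q ^ k - 1) * real (gcd (1 + t * \<alpha>) n) / real (t * n) \<and>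
         card (hweight ` (C - {0})) \<le> num_rho_orbits n lam (C - {0}) \<and>
         (card (hweight ` (C - {0})) = num_rho_orbits n lam (C - {0}) \<longleftrightarrow>
           (\<forall>c1 \<in> C - {0}. \<forall>c2 \<in> C - {0}. hweight c1 = hweight c2 \<longrightarrow>
              (\<exists>j::int. rho_pow n lam j c1 = c2)))"
proof -
  interpret constacyclic_coset lam emb zeta n t \<alpha> m q
    using n_pos coprime_nq lam_nz t_def emb zeta_prim zeta_n m_def
    by unfold_locales (simp_all add: q_def)
  have "C = code"
    unfolding C_def code_def gen_def ..
  have finite: "finite (code - {0})"
    using finite_code by simp
  have invariant: "\<forall>c\<in>code - {0}. \<forall>d\<in>rho_orbit n lam c. hweight d = hweight c"
    using hweight_rho_orbit by blast
  show ?thesis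
    unfolding \<open>C = code\<close> k_def num_rho_orbits_def in_rho_orbit_iff[symmetric]
    using real_num_rho_orbits_code[unfolded num_rho_orbits_def]
      card_invariant_image_le[OF finite orbit_partition_code invariant]
      card_invariant_image_eq_iff[OF finite orbit_partition_code invariant]
    by blast
qed

end
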